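(* Let $d>0$, $\gamma>0$, $\beta>0$ and $\nu\ge 0$ be fixed with $\mathcal{R}_0=\beta/(\gamma+d)>1$. For each delay $\tau\ge 0$ let $(S^*,I^*(\tau))$ be the endemic equilibrium of the system described in the context, and let $$F(\omega,\tau)=\omega^2\left(\omega^4+a_1(\tau)\,\omega^2+a_0(\tau)\right),$$ with $a_1,a_0$ as defined in the context. Then the set of delays $\tau\ge 0$ for which $F(\omega,\tau)=0$ has a positive root $\omega>0$ is bounded, i.e. it is contained in a bounded interval $[0,\tau_{max})$ with $\tau_{max}<\infty$.
   Context: The model is the delay system for the fractions of susceptible $S$ and infected $I$ individuals (with immune fraction $R=1-S-I$): $$\dot S(t)=d(1-S(t))-\beta I(t)S(t)+I(t-\tau)\big(\gamma+\nu\beta(1-S(t-\tau)-I(t-\tau))\big)\exp\!\Big(-d\tau-\nu\beta\int_{t-\tau}^{t}I(u)\,du\Big),$$ $$\dot I(t)=\beta I(t)S(t)-(\gamma+d)I(t),$$ where $d>0$ is the per capita mortality (and birth) rate, $\beta$ the transmission rate, $\gamma$ the recovery rate, $\nu\ge0$ the boosting force and $\tau>0$ the maximal duration of immunity without boosting. When $\mathcal{R}_0=\beta/(\gamma+d)>1$ there is a unique endemic equilibrium $(S^*,I^* )$ with $S^*=1/\mathcal{R}_0$ and $I^*=I^*(\tau)>0$ the solution of $d(1-S^* )-\beta I^*S^*+(\gamma+\nu\beta(1-S^*-I^* ))I^*e^{-d\tau-\nu\beta\tau I^*}=0$. Define $\mu(\tau)=\beta I^*e^{-\tau(d+\nu\beta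 I^* )}$, $\sigma(\tau)=\gamma+\nu\beta(1-1/\mathcal{R}_0-I^* )$, and $$a_1(\tau)=d^2+\beta^2(I^* )^2-2\beta\gamma I^*-\nu^2\mu^2,$$ $$a_0(\tau)=(\beta I^*(\gamma+d))^2-2\nu\beta I^*(d+\beta I^* )\mu\sigma-(\sigma-\nu\beta I^* )^2\mu^2-2\nu^2\mu^2\beta I^*\sigma.$$ The function $F(\omega,\tau)$ equals $|P(i\omega,\tau)|^2-|Q(i\omega,\tau)|^2$ where $P(\lambda,\tau)=\lambda^3+\lambda^2(d+\beta I^* )+\lambda\beta(\gamma+d)I^*+\nu\beta I^*\mu\sigma$ and $Q(\lambda,\tau)=(\lambda^2\nu-\lambda(\sigma-\nu\beta I^* )-\nu\beta I^*\sigma)\mu$; the characteristic equation of the linearization at the endemic equilibrium is $P(\lambda,\tau)+Q(\lambda,\tau)e^{-\lambda\tau}=0$, and it has a purely imaginary root $i\omega$, $\omega>0$, only if $F(\omega,\tau)=0$. *)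

theory Defs
  imports Complex_Main
begin

definition R0 :: "real \<Rightarrow> real \<Rightarrow> real \<Rightarrow> real" where
  "R0 d \<beta> \<gamma> = \<beta> / (\<gamma> + d)"

definition endemic_eq :: "real \<Rightarrow> real \<Rightarrow> real \<Rightarrow> real \<Rightarrow> real \<Rightarrow> real \<Rightarrow> bool" where
  "endemic_eq d \<beta> \<gamma> \<nu> \<tau> I \<longleftrightarrow>
     (let S = 1 / R0 d \<beta> \<gamma> in
      d * (1 - S) - \<beta> * I * S + (\<gamma> + \<nu> * \<beta> * (1 - S - I)) * I * exp (- d * \<tau> - \<nu> * \<beta> * \<tau> * I) = 0)"

definition mu_fn :: "real \<Rightarrow> real \<Rightarrow> real \<Rightarrow> real \<Rightarrow> real \<Rightarrow> real \<Rightarrow> real" where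
  "mu_fn d \<beta> \<gamma> \<nu> \<tau> I = \<beta> * I * exp (- \<tau> * (d + \<nu> * \<beta> * I))"

definition sigma_fn :: "real \<Rightarrow> real \<Rightarrow> real \<Rightarrow> real \<Rightarrow> real \<Rightarrow> real" where
  "sigma_fn d \<beta> \<gamma> \<nu> I = \<gamma> + \<nu> * \<beta> * (1 - 1 / R0 d \<beta> \<gamma> - I)"

definition a1_fn :: "real \<Rightarrow> real \<Rightarrow> real \<Rightarrow> real \<Rightarrow> real \<Rightarrow> real \<Rightarrow> real" where
  "a1_fn d \<beta> \<gamma> \<nu> \<tau> I =
     (let \<mu> = mu_fn d \<beta> \<gamma> \<nu> \<tau> I in
      d^2 + \<beta>^2 * I^2 - 2 * \<beta> * \<gamma> * I - \<nu>^2 * \<mu>^2)"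

definition a0_fn :: "real \<Rightarrow> real \<Rightarrow> real \<Rightarrow> real \<Rightarrow> real \<Rightarrow> real \<Rightarrow> real" where
  "a0_fn d \<beta> \<gamma> \<nu> \<tau> I =
     (let \<mu> = mu_fn d \<beta> \<gamma> \<nu> \<tau> I; \<sigma> = sigma_fn d \<beta> \<gamma> \<nu> I in
      (\<beta> * I * (\<gamma> + d))^2 - 2 * \<nu> * \<beta> * I * (d + \<beta> * I) * \<mu> * \<sigma>
      - (\<sigma> - \<nu> * \<beta> * I)^2 * \<mu>^2 - 2 * \<nu>^2 * \<mu>^2 * \<beta> * I * \<sigma>)"

definition F_fn :: "real \<Rightarrow> real \<Rightarrow> real \<Rightarrow> real \<Rightarrow> real \<Rightarrow> real \<Rightarrow> real \<Rightarrow> real" where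
  "F_fn d \<beta> \<gamma> \<nu> \<tau> I \<omega> =
     \<omega>^2 * (\<omega>^4 + a1_fn d \<beta> \<gamma> \<nu> \<tau> I * \<omega>^2 + a0_fn d \<beta> \<gamma> \<nu> \<tau> I)"

end

theory Submission
  imports Defs "HOL-Real_Asymp.Real_Asymp"
begin

text \<open>
  Multiplied by \<open>\<beta>\<close>, the equilibrium equation becomes
  \<open>\<beta>(\<gamma> + d)(I\<^sup>* - I\<^sub>\<infinity>) = \<sigma>(I\<^sup>*) \<mu>(\<tau>)\<close> with \<open>I\<^sub>\<infinity> = d(\<R>\<^sub>0 - 1)/\<beta>\<close>,
  and \<open>0 \<le> \<mu>(\<tau>) \<le> \<beta> I\<^sup>* exp(-d\<tau>)\<close>. Hence \<open>I\<^sup>*\<close> stays bounded, \<open>\<mu>(\<tau>) \<rightarrow> 0\<close> and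
  \<open>I\<^sup>*(\<tau>) \<rightarrow> I\<^sub>\<infinity>\<close> as \<open>\<tau> \<rightarrow> \<infinity>\<close>. With \<open>b = \<beta> I\<^sub>\<infinity>\<close> this gives
  \<open>a\<^sub>1 \<rightarrow> d\<^sup>2 + b\<^sup>2 - 2\<gamma>b\<close> and \<open>a\<^sub>0 \<rightarrow> (b(\<gamma> + d))\<^sup>2 > 0\<close>, so
  \<open>a\<^sub>1 + 2\<surd>a\<^sub>0 \<rightarrow> (d + b)\<^sup>2 > 0\<close>. For large \<open>\<tau>\<close> therefore
  \<open>z\<^sup>2 + a\<^sub>1 z + a\<^sub>0 \<ge> (z - \<surd>a\<^sub>0)\<^sup>2 + (a\<^sub>1 + 2\<surd>a\<^sub>0) z > 0\<close> for every \<open>z = \<omega>\<^sup>2 > 0\<close>.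
\<close>

definition endemic_limit :: "real \<Rightarrow> real \<Rightarrow> real \<Rightarrow> real" where
  "endemic_limit d \<beta> \<gamma> = d * (R0 d \<beta> \<gamma> - 1) / \<beta>"

lemma endemic_eq_iff_balance:
  assumes "\<beta> \<noteq> 0" and "\<gamma> + d \<noteq> 0"
  shows "endemic_eq d \<beta> \<gamma> \<nu> \<tau> I \<longleftrightarrow>
    \<beta> * (\<gamma> + d) * (I - endemic_limit d \<beta> \<gamma>) = sigma_fn d \<beta> \<gamma> \<nu> I * mu_fn d \<beta> \<gamma> \<nu> \<tau> I"
proof -
  define E where "E = exp (- \<tau> * (d + \<nu> * \<beta> * I))"
  define \<sigma> where "\<sigma> = sigma_fn d \<beta> \<gamma> \<nu> I"
  have limit: "\<beta> * (\<gamma> + d) * endemic_limit d \<beta> \<gamma> = d * (\<beta> - (\<gamma> + d))"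
  proof -
    have "R0 d \<beta> \<gamma> - 1 = (\<beta> - (\<gamma> + d)) / (\<gamma> + d)"
      using assms unfolding R0_def by (simp add: field_simps)
    then show ?thesis
      using assms unfolding endemic_limit_def by simp
  qed
  have "exp (- d * \<tau> - \<nu> * \<beta> * \<tau> * I) = E"
    unfolding E_def by (simp add: algebra_simps)
  then have "endemic_eq d \<beta> \<gamma> \<nu> \<tau> I \<longleftrightarrow> d * (1 - (\<gamma> + d) / \<beta>) - (\<gamma> + d) * I + \<sigma> * I * E = 0"
    using assms unfolding endemic_eq_def \<sigma>_def sigma_fn_def R0_def Let_def by (simp add: ac_simps)
  also have "\<dots> \<longleftrightarrow> d * (\<beta> - (\<gamma> + d)) - \<beta> * (\<gamma> + d) * I + \<sigma> * (\<beta> * I * E) = 0"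
    using assms by (simp add: field_simps)
  finally show ?thesis
    using limit unfolding \<sigma>_def mu_fn_def E_def by (auto simp: algebra_simps)
qed

lemma mu_fn_bounds:
  assumes "\<beta> \<ge> 0" and "\<nu> \<ge> 0" and "\<tau> \<ge> 0" and "I \<ge> 0"
  shows "0 \<le> mu_fn d \<beta> \<gamma> \<nu> \<tau> I" and "mu_fn d \<beta> \<gamma> \<nu> \<tau> I \<le> \<beta> * I * exp (- d * \<tau>)"
proof -
  have "\<nu> * \<beta> * I * \<tau> \<ge> 0"
    using assms by simp
  then have "exp (- \<tau> * (d + \<nu> * \<beta> * I)) \<le> exp (- d * \<tau>)"
    by (simp add: algebra_simps)
  then show "mu_fn d \<beta> \<gamma> \<nu> \<tau> I \<le> \<beta> * I * exp (- d * \<tau>)"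
    using assms unfolding mu_fn_def by (simp add: mult_left_mono)
  show "0 \<le> mu_fn d \<beta> \<gamma> \<nu> \<tau> I"
    using assms unfolding mu_fn_def by simp
qed

lemma sigma_fn_linear: "sigma_fn d \<beta> \<gamma> \<nu> I = sigma_fn d \<beta> \<gamma> \<nu> 0 - \<nu> * \<beta> * I"
  unfolding sigma_fn_def by (simp add: algebra_simps)

lemma quadratic_pos_on_pos_reals:
  fixes a1 a0 z :: real
  assumes "a0 \<ge> 0" and "a1 > - 2 * sqrt a0" and "z > 0"
  shows "z\<^sup>2 + a1 * z + a0 > 0"
proof -
  have "0 \<le> (z - sqrt a0)\<^sup>2"
    by simp
  also have "\<dots> = z\<^sup>2 - 2 * sqrt a0 * z + a0"
    using assms by (simp add: power2_diff algebra_simps)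
  also have "\<dots> < z\<^sup>2 + a1 * z + a0"
    using mult_strict_right_mono[OF assms(2,3)] by simp
  finally show ?thesis .
qed

lemma F_fn_pos:
  assumes "a0_fn d \<beta> \<gamma> \<nu> \<tau> I \<ge> 0" and "a1_fn d \<beta> \<gamma> \<nu> \<tau> I + 2 * sqrt (a0_fn d \<beta> \<gamma> \<nu> \<tau> I) > 0"
    and "\<omega> \<noteq> 0"
  shows "F_fn d \<beta> \<gamma> \<nu> \<tau> I \<omega> > 0"
proof -
  have "(\<omega>\<^sup>2)\<^sup>2 + a1_fn d \<beta> \<gamma> \<nu> \<tau> I * \<omega>\<^sup>2 + a0_fn d \<beta> \<gamma> \<nu> \<tau> I > 0"
    using assms by (intro quadratic_pos_on_pos_reals) auto
  then show ?thesis
    using assms unfolding F_fn_def by simp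
qed

locale endemic_branch =
  fixes d \<beta> \<gamma> \<nu> :: real and Istar :: "real \<Rightarrow> real"
  assumes d_pos: "d > 0" and beta_pos: "\<beta> > 0" and nu_nonneg: "\<nu> \<ge> 0"
    and R0_gt_1: "R0 d \<beta> \<gamma> > 1"
    and equilibrium: "\<And>\<tau>. \<tau> \<ge> 0 \<Longrightarrow> Istar \<tau> > 0 \<and> endemic_eq d \<beta> \<gamma> \<nu> \<tau> (Istar \<tau>)"
begin

abbreviation I_lim :: real where
  "I_lim \<equiv> endemic_limit d \<beta> \<gamma>"

abbreviation \<mu> :: "real \<Rightarrow> real" where
  "\<mu> \<tau> \<equiv> mu_fn d \<beta> \<gamma> \<nu> \<tau> (Istar \<tau>)"

lemma gamma_plus_d_pos: "\<gamma> + d > 0"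
proof (rule ccontr)
  assume "\<not> \<gamma> + d > 0"
  then have "\<beta> / (\<gamma> + d) \<le> 0"
    using beta_pos by (simp add: divide_nonneg_nonpos)
  then show False
    using R0_gt_1 unfolding R0_def by simp
qed

lemma I_lim_pos: "I_lim > 0"
  using d_pos beta_pos R0_gt_1 unfolding endemic_limit_def by simp

lemma equilibrium_balance:
  assumes "\<tau> \<ge> 0"
  shows "\<beta> * (\<gamma> + d) * (Istar \<tau> - I_lim) = sigma_fn d \<beta> \<gamma> \<nu> (Istar \<tau>) * \<mu> \<tau>"
  using equilibrium[OF assms] endemic_eq_iff_balance beta_pos gamma_plus_d_pos by simp

lemma mu_bounds:
  assumes "\<tau> \<ge> 0"
  shows "0 \<le> \<mu> \<tau>" and "\<mu> \<tau> \<le> \<beta> * Istar \<tau> * exp (- d * \<tau>)"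
  using mu_fn_bounds beta_pos nu_nonneg assms equilibrium[OF assms] by (simp_all add: less_imp_le)

lemma eventually_Istar_le: "eventually (\<lambda>\<tau>. Istar \<tau> \<le> 2 * I_lim) at_top"
proof -
  let ?c = "\<bar>sigma_fn d \<beta> \<gamma> \<nu> 0\<bar>"
  have "((\<lambda>\<tau>. ?c * exp (- d * \<tau>)) \<longlongrightarrow> 0) at_top"
    using d_pos by real_asymp
  then have "eventually (\<lambda>\<tau>. ?c * exp (- d * \<tau>) < (\<gamma> + d) / 2) at_top"
    using gamma_plus_d_pos by (intro order_tendstoD(2)) auto
  with eventually_ge_at_top[of 0] show ?thesis
  proof eventually_elim
    case (elim \<tau>)
    define I where "I = Istar \<tau>"
    have I_pos: "I > 0"
      using equilibrium elim unfolding I_def by blast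
    have "\<beta> * (\<gamma> + d) * (I - I_lim) = sigma_fn d \<beta> \<gamma> \<nu> I * \<mu> \<tau>"
      using equilibrium_balance elim unfolding I_def by blast
    also have "\<dots> \<le> ?c * \<mu> \<tau>"
    proof (rule mult_right_mono)
      have "\<nu> * \<beta> * I \<ge> 0"
        using nu_nonneg beta_pos I_pos by simp
      then show "sigma_fn d \<beta> \<gamma> \<nu> I \<le> ?c"
        using sigma_fn_linear[of d \<beta> \<gamma> \<nu> I] by linarith
      show "0 \<le> \<mu> \<tau>"
        using mu_bounds elim by blast
    qed
    also have "\<dots> \<le> ?c * (\<beta> * I * exp (- d * \<tau>))"
      using mu_bounds elim unfolding I_def by (intro mult_left_mono) auto
    also have "\<dots> = \<beta> * I * (?c * exp (- d * \<tau>))"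
      by simp
    also have "\<dots> \<le> \<beta> * I * ((\<gamma> + d) / 2)"
      using elim beta_pos I_pos by (intro mult_left_mono) auto
    finally have "\<beta> * (\<gamma> + d) * (I - I_lim) \<le> \<beta> * (\<gamma> + d) * (I / 2)"
      by (simp add: algebra_simps)
    then have "I - I_lim \<le> I / 2"
      using beta_pos gamma_plus_d_pos by simp
    then show ?case
      unfolding I_def by simp
  qed
qed

lemma mu_tendsto_0: "(\<mu> \<longlongrightarrow> 0) at_top"
proof (rule tendsto_sandwich)
  show "eventually (\<lambda>\<tau>. 0 \<le> \<mu> \<tau>) at_top"
    using eventually_ge_at_top[of 0] by eventually_elim (use mu_bounds in blast)
  show "eventually (\<lambda>\<tau>. \<mu> \<tau> \<le> \<beta> * (2 * I_lim) * exp (- d * \<tau>)) at_top"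
    using eventually_Istar_le eventually_ge_at_top[of 0]
  proof eventually_elim
    case (elim \<tau>)
    then have "\<beta> * Istar \<tau> * exp (- d * \<tau>) \<le> \<beta> * (2 * I_lim) * exp (- d * \<tau>)"
      using beta_pos by (intro mult_right_mono) auto
    then show ?case
      using mu_bounds elim by (meson order_trans)
  qed
  show "((\<lambda>\<tau>. \<beta> * (2 * I_lim) * exp (- d * \<tau>)) \<longlongrightarrow> 0) at_top"
    using d_pos by real_asymp
qed simp

lemma Istar_tendsto: "(Istar \<longlongrightarrow> I_lim) at_top"
proof (rule LIM_zero_cancel, rule tendsto_0_le[OF mu_tendsto_0])
  let ?s = "\<bar>sigma_fn d \<beta> \<gamma> \<nu> 0\<bar> + \<nu> * \<beta> * (2 * I_lim)"
  show "eventually (\<lambda>\<tau>. norm (Istar \<tau> - I_lim) \<le> norm (\<mu> \<tau>) * (?s / (\<beta> * (\<gamma> + d)))) at_top"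
    using eventually_Istar_le eventually_ge_at_top[of 0]
  proof eventually_elim
    case (elim \<tau>)
    have "\<nu> * \<beta> * Istar \<tau> \<le> \<nu> * \<beta> * (2 * I_lim)"
      using elim nu_nonneg beta_pos by (simp add: mult_left_mono)
    moreover have "\<nu> * \<beta> * Istar \<tau> \<ge> 0"
      using elim equilibrium nu_nonneg beta_pos by (simp add: less_imp_le)
    ultimately have "\<bar>sigma_fn d \<beta> \<gamma> \<nu> (Istar \<tau>)\<bar> \<le> ?s"
      using sigma_fn_linear[of d \<beta> \<gamma> \<nu> "Istar \<tau>"] by linarith
    then have "\<bar>sigma_fn d \<beta> \<gamma> \<nu> (Istar \<tau>) * \<mu> \<tau>\<bar> \<le> ?s * \<bar>\<mu> \<tau>\<bar>"
      unfolding abs_mult by (intro mult_right_mono) auto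
    moreover have "\<bar>\<beta> * (\<gamma> + d) * (Istar \<tau> - I_lim)\<bar> = \<beta> * (\<gamma> + d) * \<bar>Istar \<tau> - I_lim\<bar>"
      using beta_pos gamma_plus_d_pos by (simp add: abs_mult)
    ultimately have "\<beta> * (\<gamma> + d) * \<bar>Istar \<tau> - I_lim\<bar> \<le> ?s * \<bar>\<mu> \<tau>\<bar>"
      using equilibrium_balance[OF elim(2)] by simp
    then have "\<bar>Istar \<tau> - I_lim\<bar> \<le> ?s * \<bar>\<mu> \<tau>\<bar> / (\<beta> * (\<gamma> + d))"
      using beta_pos gamma_plus_d_pos by (simp add: pos_le_divide_eq mult.commute)
    then show ?case
      by (simp add: mult.commute)
  qed
qed

lemma a1_tendsto:
  "((\<lambda>\<tau>. a1_fn d \<beta> \<gamma> \<nu> \<tau> (Istar \<tau>)) \<longlongrightarrow> d\<^sup>2 + (\<beta> * I_lim)\<^sup>2 - 2 * \<gamma> * (\<beta> * I_lim)) at_top"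
proof -
  have "((\<lambda>\<tau>. a1_fn d \<beta> \<gamma> \<nu> \<tau> (Istar \<tau>)) \<longlongrightarrow> d\<^sup>2 + \<beta>\<^sup>2 * I_lim\<^sup>2 - 2 * \<beta> * \<gamma> * I_lim - \<nu>\<^sup>2 * 0\<^sup>2) at_top"
    unfolding a1_fn_def Let_def by (intro tendsto_intros Istar_tendsto mu_tendsto_0)
  then show ?thesis
    by (simp add: power_mult_distrib algebra_simps)
qed

lemma a0_tendsto:
  "((\<lambda>\<tau>. a0_fn d \<beta> \<gamma> \<nu> \<tau> (Istar \<tau>)) \<longlongrightarrow> (\<beta> * I_lim * (\<gamma> + d))\<^sup>2) at_top"
proof -
  let ?\<sigma> = "sigma_fn d \<beta> \<gamma> \<nu> I_lim"
  have "((\<lambda>\<tau>. a0_fn d \<beta> \<gamma> \<nu> \<tau> (Istar \<tau>)) \<longlongrightarrow>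
      (\<beta> * I_lim * (\<gamma> + d))\<^sup>2 - 2 * \<nu> * \<beta> * I_lim * (d + \<beta> * I_lim) * 0 * ?\<sigma>
      - (?\<sigma> - \<nu> * \<beta> * I_lim)\<^sup>2 * 0\<^sup>2 - 2 * \<nu>\<^sup>2 * 0\<^sup>2 * \<beta> * I_lim * ?\<sigma>) at_top"
    unfolding a0_fn_def Let_def sigma_fn_def by (intro tendsto_intros Istar_tendsto mu_tendsto_0)
  then show ?thesis
    by simp
qed

lemma eventually_F_fn_pos:
  "eventually (\<lambda>\<tau>. \<forall>\<omega>. \<omega> \<noteq> 0 \<longrightarrow> F_fn d \<beta> \<gamma> \<nu> \<tau> (Istar \<tau>) \<omega> > 0) at_top"
proof -
  let ?b = "\<beta> * I_lim"
  have b_pos: "?b > 0"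
    using beta_pos I_lim_pos by simp
  have "(?b * (\<gamma> + d))\<^sup>2 > 0"
    using beta_pos I_lim_pos gamma_plus_d_pos by simp
  then have a0_pos: "eventually (\<lambda>\<tau>. a0_fn d \<beta> \<gamma> \<nu> \<tau> (Istar \<tau>) > 0) at_top"
    by (rule order_tendstoD(1)[OF a0_tendsto])
  have "((\<lambda>\<tau>. a1_fn d \<beta> \<gamma> \<nu> \<tau> (Istar \<tau>) + 2 * sqrt (a0_fn d \<beta> \<gamma> \<nu> \<tau> (Istar \<tau>)))
      \<longlongrightarrow> d\<^sup>2 + ?b\<^sup>2 - 2 * \<gamma> * ?b + 2 * sqrt ((?b * (\<gamma> + d))\<^sup>2)) at_top"
    by (intro tendsto_intros a1_tendsto a0_tendsto)
  also have "d\<^sup>2 + ?b\<^sup>2 - 2 * \<gamma> * ?b + 2 * sqrt ((?b * (\<gamma> + d))\<^sup>2) = (d + ?b)\<^sup>2"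
  proof -
    have "sqrt ((?b * (\<gamma> + d))\<^sup>2) = ?b * (\<gamma> + d)"
      using b_pos gamma_plus_d_pos by simp
    then show ?thesis
      by (simp add: power2_sum algebra_simps)
  qed
  finally have "eventually (\<lambda>\<tau>.
      a1_fn d \<beta> \<gamma> \<nu> \<tau> (Istar \<tau>) + 2 * sqrt (a0_fn d \<beta> \<gamma> \<nu> \<tau> (Istar \<tau>)) > 0) at_top"
    by (rule order_tendstoD(1)) (use d_pos b_pos in simp)
  with a0_pos show ?thesis
    by eventually_elim (simp add: F_fn_pos)
qed

end

theorem proposition1:
  fixes d \<beta> \<gamma> \<nu> :: real and Istar :: "real \<Rightarrow> real"
  assumes "d > 0" and "\<gamma> > 0" and "\<beta> > 0" and "\<nu> \<ge> 0"
    and "R0 d \<beta> \<gamma> > 1"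
    and "\<And>\<tau>. \<tau> \<ge> 0 \<Longrightarrow> Istar \<tau> > 0 \<and> endemic_eq d \<beta> \<gamma> \<nu> \<tau> (Istar \<tau>)"
  shows "\<exists>\<tau>max. {\<tau>. \<tau> \<ge> 0 \<and> (\<exists>\<omega>>0. F_fn d \<beta> \<gamma> \<nu> \<tau> (Istar \<tau>) \<omega> = 0)} \<subseteq> {0..<\<tau>max}"
proof -
  interpret endemic_branch d \<beta> \<gamma> \<nu> Istar
    using assms by unfold_locales auto
  obtain N where F_pos: "\<And>\<tau> \<omega>. \<tau> \<ge> N \<Longrightarrow> \<omega> \<noteq> 0 \<Longrightarrow> F_fn d \<beta> \<gamma> \<nu> \<tau> (Istar \<tau>) \<omega> > 0"
    using eventually_F_fn_pos unfolding eventually_at_top_linorder by blast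
  have "\<tau> < N" if "\<omega> > 0" and "F_fn d \<beta> \<gamma> \<nu> \<tau> (Istar \<tau>) \<omega> = 0" for \<tau> \<omega>
  proof (rule ccontr)
    assume "\<not> \<tau> < N"
    then have "F_fn d \<beta> \<gamma> \<nu> \<tau> (Istar \<tau>) \<omega> > 0"
      using F_pos that(1) by simp
    with that(2) show False
      by simp
  qed
  then show ?thesis
    by (intro exI[of _ N]) auto
qed

end
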